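(* Let $\lambda$ be a partition and $\alpha=(\alpha_1,\dots,\alpha_n)$ a weak composition. The map $\rho^{\uparrow}_N:=\rho_N\circ\mathrm{rot}^2$ is a bijection from $\mathrm{MLQ}_0(\lambda,\alpha)$ to $\mathrm{MLQ}_0(\lambda,\mathrm{rev}(\alpha))$, where $\mathrm{rev}(\alpha)=(\alpha_n,\dots,\alpha_1)$.
   Context: For a partition $\lambda$ with $L=\lambda_1$ ($\lambda'$ the conjugate), a multiline queue of shape $\lambda$ on $n$ columns is a tuple $M=(B_1,\dots,B_L)$ of subsets of $[n]$ with $|B_j|=\lambda'_j$, drawn as an $L\times n$ grid, rows $1..L$ bottom to top, columns $1..n$ left to right, ball in $(r,j)$ iff $j\in B_r$. $\mathrm{MLQ}_0(\lambda,\alpha)$ is the set of such $M$ that are nonwrapping (see below) and have exactly $\alpha_j$ balls in column $j$ for each $j$. $\mathrm{rot}^2$ rotates the grid by $180^\circ$: the ball in cell $(r,c)$ goes to cell $(L+1-r,n+1-c)$. Tuples with empty top rows are identified with the tuple obtained by deleting them. $\mathrm{cw}(B)$ scans columns left to right, each top to bottom, recording row numbers. Nonwrapping: for $r=L,\dots,2$, unlabelled balls of row $r$ get label $r$; balls of row $r$ in decreasing label order (left to right among ties) are each paired with the first unlabelled ball of row $r-1$ weakly to the right cyclically modulo $n$, which gets the same label; a pairing wraps if the lower ball is strictly left of the upper one. $\operatorname{maj}(M)=\sum(\ell(p)-r(p)+1)$ over wrapping pairings ($r(p)$ upper row, $\ell(p)$ label); nonwrapping means $\operatorname{maj}(M)=0$.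 Collapsing of any tuple $B=(B_1,\dots,B_L)$ of subsets of $[n]$: $\mathrm{Par}_i(w)$ writes "(" for each letter $i+1$ and ")" for each letter $i$ of $w$ and iteratively matches a "(" with a ")" to its right when adjacent or separated only by matched parentheses; $e_i^\star(B)$ moves every ball of row $i+1$ whose letter in $\mathrm{cw}(B)$ is unmatched in $\mathrm{Par}_i(\mathrm{cw}(B))$ down to row $i$ in the same column; $e^\star_{[a,b]}=e^\star_ae^\star_{a+1}\cdots e^\star_b$ (acting right to left); $\rho_N(B)=e^\star_{[1,L-1]}\cdots e^\star_{[1,1]}(B)$. *)

theory Defs
  imports Main "HOL-Library.Product_Lexorder"
begin

text \<open>A partition is a weakly decreasing list of positive naturals.
  A tuple B = (B_1,...,B_L) of subsets of [n] is a list of sets; row r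
  (1-based, bottom to top) is B ! (r-1).\<close>

definition is_partition :: "nat list \<Rightarrow> bool" where
  "is_partition lam \<longleftrightarrow> sorted_wrt (\<ge>) lam \<and> 0 \<notin> set lam"

definition first_part :: "nat list \<Rightarrow> nat" where
  "first_part lam = (if lam = [] then 0 else hd lam)"

definition conj_part :: "nat list \<Rightarrow> nat \<Rightarrow> nat" where
  "conj_part lam j = length (filter (\<lambda>x. j \<le> x) lam)"

definition next_ball :: "nat set \<Rightarrow> nat \<Rightarrow> nat" where
  "next_ball A c = (if {d\<in>A. c \<le> d} \<noteq> {} then Min {d\<in>A. c \<le> d} else Min A)"

text \<open>Pair the (already ordered) balls (column, label) of row r with the
  unlabelled balls A of row r-1; returns labels of row r-1 and the maj
  contribution of the wrapping pairings.\<close>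
fun pair_row :: "nat \<Rightarrow> (nat \<times> nat) list \<Rightarrow> nat set \<Rightarrow> (nat \<Rightarrow> nat option) \<Rightarrow> nat
    \<Rightarrow> (nat \<Rightarrow> nat option) \<times> nat" where
  "pair_row r [] A lab m = (lab, m)"
| "pair_row r ((c,l)#xs) A lab m =
     (let d = next_ball A c in
      pair_row r xs (A - {d}) (lab(d \<mapsto> l)) (m + (if d < c then l + 1 - r else 0)))"

text \<open>maj_from B r lab: process rows r, r-1, ..., 2, where lab gives the labels
  already assigned to balls of row r (unlabelled balls get label r).\<close>
fun maj_from :: "nat set list \<Rightarrow> nat \<Rightarrow> (nat \<Rightarrow> nat option) \<Rightarrow> nat" where
  "maj_from B 0 lab = 0"
| "maj_from B (Suc 0) lab = 0"
| "maj_from B (Suc (Suc k)) lab =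
     (let r = Suc (Suc k);
          lab' = (\<lambda>c. case lab c of Some l \<Rightarrow> l | None \<Rightarrow> r);
          balls = sort_key (\<lambda>c. (- int (lab' c), c)) (sorted_list_of_set (B ! Suc k));
          res = pair_row r (map (\<lambda>c. (c, lab' c)) balls) (B ! k) Map.empty 0
      in snd res + maj_from B (Suc k) (fst res))"

definition maj :: "nat set list \<Rightarrow> nat" where
  "maj B = maj_from B (length B) Map.empty"

definition nonwrapping :: "nat set list \<Rightarrow> bool" where
  "nonwrapping B \<longleftrightarrow> maj B = 0"

definition col_count :: "nat set list \<Rightarrow> nat \<Rightarrow> nat" where
  "col_count B j = card {r \<in> {1..length B}. j \<in> B ! (r - 1)}"

definition MLQ0 :: "nat list \<Rightarrow> nat list \<Rightarrow> nat set list set" where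
  "MLQ0 lam alpha =
     {B. length B = first_part lam
       \<and> (\<forall>r \<in> {1..length B}. B ! (r - 1) \<subseteq> {1..length alpha}
                               \<and> card (B ! (r - 1)) = conj_part lam r)
       \<and> nonwrapping B
       \<and> (\<forall>j \<in> {1..length alpha}. col_count B j = alpha ! (j - 1))}"

text \<open>Ball in (r,c) goes to (L+1-r, n+1-c).\<close>
definition rot2 :: "nat \<Rightarrow> nat set list \<Rightarrow> nat set list" where
  "rot2 n B = rev (map (\<lambda>S. (\<lambda>c. Suc n - c) ` S) B)"

text \<open>Column word: cells (row, column) scanned columns left to right,
  each column top to bottom; cw records the row numbers.\<close>
definition cw_cells :: "nat \<Rightarrow> nat set list \<Rightarrow> (nat \<times> nat) list" where
  "cw_cells n B = concat (map (\<lambda>j. map (\<lambda>r. (r, j))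
       (filter (\<lambda>r. j \<in> B ! (r - 1)) (rev [1..<Suc (length B)]))) [1..<Suc n])"

definition cw :: "nat \<Rightarrow> nat set list \<Rightarrow> nat list" where
  "cw n B = map fst (cw_cells n B)"

text \<open>Positions (0-based) of the unmatched "(" (letters i+1) in Par_i(w):
  the usual bracket matching, computed with a stack of open positions.\<close>
fun unmatched_open :: "nat \<Rightarrow> nat list \<Rightarrow> nat \<Rightarrow> nat list \<Rightarrow> nat set" where
  "unmatched_open i [] p st = set st"
| "unmatched_open i (x#xs) p st =
     (if x = Suc i then unmatched_open i xs (Suc p) (p # st)
      else if x = i then (case st of [] \<Rightarrow> unmatched_open i xs (Suc p) []
                                   | q # st' \<Rightarrow> unmatched_open i xs (Suc p) st')
      else unmatched_open i xs (Suc p) st)"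

definition e_star :: "nat \<Rightarrow> nat \<Rightarrow> nat set list \<Rightarrow> nat set list" where
  "e_star n i B =
     (let U = (\<lambda>p. snd (cw_cells n B ! p)) ` unmatched_open i (cw n B) 0 []
      in B[i - 1 := B ! (i - 1) \<union> U, i := B ! i - U])"

text \<open>e_[a,b] = e_a e_(a+1) ... e_b, acting right to left (e_b first).\<close>
definition e_star_int :: "nat \<Rightarrow> nat \<Rightarrow> nat \<Rightarrow> nat set list \<Rightarrow> nat set list" where
  "e_star_int n a b B = fold (e_star n) (rev [a..<Suc b]) B"

text \<open>rho_N = e_[1,L-1] ... e_[1,1], with e_[1,1] applied first.\<close>
definition rho_N :: "nat \<Rightarrow> nat set list \<Rightarrow> nat set list" where
  "rho_N n B = fold (\<lambda>k. e_star_int n 1 k) [1..<length B] B"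

definition rho_up :: "nat \<Rightarrow> nat set list \<Rightarrow> nat set list" where
  "rho_up n B = rho_N n (rot2 n B)"

end

theory Submission
  imports Defs
begin

text \<open>Encode a row \<open>X\<close> by its prefix counts \<open>P_X(t) = #{c \<in> X. c \<le> t}\<close>. A pair of adjacent
  rows is nonwrapping iff the upper row is dominated by the lower one on every suffix of columns,
  so after the rotation every row \<open>Y\<close> and the row \<open>X\<close> above it satisfy \<open>P_Y \<le> P_X\<close>. For such a
  pair the crystal operator is explicit: it moves down the balls of \<open>X\<close> in the columns where the
  excess \<open>D = P_X - P_Y\<close> attains its minimum over all columns to the right, so the new rows have
  prefix counts \<open>P_Y + m\<close> and \<open>P_X - m\<close> with \<open>m(t) = min {D(u). t \<le> u \<le> n}\<close>.

  Collapsing lowers each row in turn through the rows already collapsed. From the formulas one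
  reads off that prefix domination persists along the way, so the formulas keep applying; that
  row sizes and column contents are preserved; that the output is nonwrapping; and that \<open>m\<close>,
  hence the input, is recovered as the running maximum of \<open>P_low - P_up = 2m - D\<close>. Thus
  \<open>rho_up\<close> injects \<open>MLQ_0(lam, alpha)\<close> into \<open>MLQ_0(lam, rev alpha)\<close>, and by symmetry and
  finiteness it is a bijection.\<close>

section \<open>Prefix counts and excess\<close>

definition prefix_count :: "nat set \<Rightarrow> nat \<Rightarrow> int" where
  "prefix_count X t = int (card {c\<in>X. c \<le> t})"

lemma prefix_count_Suc:
  "prefix_count X (Suc t) = prefix_count X t + (if Suc t \<in> X then 1 else 0)"
proof -
  have "{c\<in>X. c \<le> Suc t} = (if Suc t \<in> X then insert (Suc t) {c\<in>X. c \<le> t} else {c\<in>X. c \<le> t})"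
    by (auto simp: le_Suc_eq)
  then show ?thesis
    unfolding prefix_count_def by simp
qed

lemma prefix_count_0: "0 \<notin> X \<Longrightarrow> prefix_count X 0 = 0"
  unfolding prefix_count_def by (simp add: Collect_conv_if)

lemma prefix_count_card: "X \<subseteq> {1..n} \<Longrightarrow> prefix_count X n = int (card X)"
proof -
  assume "X \<subseteq> {1..n}"
  then have "{c\<in>X. c \<le> n} = X"
    by auto
  then show ?thesis
    unfolding prefix_count_def by simp
qed

lemma prefix_count_Un: "X \<inter> Y = {} \<Longrightarrow> prefix_count (X \<union> Y) t = prefix_count X t + prefix_count Y t"
proof -
  assume "X \<inter> Y = {}"
  then have "card ({c\<in>X. c \<le> t} \<union> {c\<in>Y. c \<le> t}) = card {c\<in>X. c \<le> t} + card {c\<in>Y. c \<le> t}"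
    by (intro card_Un_disjoint) auto
  moreover have "{c\<in>X \<union> Y. c \<le> t} = {c\<in>X. c \<le> t} \<union> {c\<in>Y. c \<le> t}" by auto
  ultimately show ?thesis
    unfolding prefix_count_def by simp
qed

lemma prefix_count_Diff: "U \<subseteq> X \<Longrightarrow> prefix_count (X - U) t = prefix_count X t - prefix_count U t"
proof -
  assume "U \<subseteq> X"
  then have "X = (X - U) \<union> U" "(X - U) \<inter> U = {}" by blast+
  then show ?thesis
    using prefix_count_Un[of "X - U" U t] by simp
qed

lemma prefix_count_eqI:
  assumes "X \<subseteq> {1..n}" "X' \<subseteq> {1..n}" "\<And>t. t \<le> n \<Longrightarrow> prefix_count X t = prefix_count X' t"
  shows "X = X'"
proof -
  have "c \<in> X \<longleftrightarrow> c \<in> X'" if "c \<in> X \<union> X'" for c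
  proof -
    have "c \<in> {1..n}" using that assms(1,2) by blast
    then obtain d where c: "c = Suc d" "Suc d \<le> n" by (cases c) auto
    then have "prefix_count X (Suc d) = prefix_count X' (Suc d)" "prefix_count X d = prefix_count X' d"
      using assms(3) by auto
    then show ?thesis using c by (simp add: prefix_count_Suc split: if_splits)
  qed
  then show ?thesis by blast
qed

lemma card_greater_eq_prefix_count:
  "finite X \<Longrightarrow> int (card {c\<in>X. t < c}) = int (card X) - prefix_count X t"
proof -
  assume "finite X"
  then have "card X = card {c\<in>X. t < c} + card {c\<in>X. c \<le> t}"
    by (subst card_Un_disjoint[symmetric]) (auto intro: arg_cong[where f = card])
  then show ?thesis
    unfolding prefix_count_def by simp
qed

definition excess :: "nat set \<Rightarrow> nat set \<Rightarrow> nat \<Rightarrow> int" where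
  "excess Y X t = prefix_count X t - prefix_count Y t"

definition min_excess :: "nat \<Rightarrow> nat set \<Rightarrow> nat set \<Rightarrow> nat \<Rightarrow> int" where
  "min_excess n Y X t = Min (excess Y X ` {t..n})"

definition prefix_le :: "nat \<Rightarrow> nat set \<Rightarrow> nat set \<Rightarrow> bool" where
  "prefix_le n Y X \<longleftrightarrow> (\<forall>t\<le>n. prefix_count Y t \<le> prefix_count X t)"

lemma excess_Suc:
  "excess Y X (Suc t) = excess Y X t + (if Suc t \<in> X then 1 else 0) - (if Suc t \<in> Y then 1 else 0)"
  unfolding excess_def by (simp add: prefix_count_Suc)

lemma excess_0: "0 \<notin> X \<Longrightarrow> 0 \<notin> Y \<Longrightarrow> excess Y X 0 = 0"
  unfolding excess_def by (simp add: prefix_count_0)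

lemma prefix_le_excess: "prefix_le n Y X \<Longrightarrow> t \<le> n \<Longrightarrow> 0 \<le> excess Y X t"
  unfolding prefix_le_def excess_def by simp

lemma prefix_le_trans: "prefix_le n A B \<Longrightarrow> prefix_le n B C \<Longrightarrow> prefix_le n A C"
  unfolding prefix_le_def by force

lemma min_excess_le: "t \<le> u \<Longrightarrow> u \<le> n \<Longrightarrow> min_excess n Y X t \<le> excess Y X u"
  unfolding min_excess_def by (rule Min_le) auto

lemma min_excess_greatest:
  assumes "t \<le> n" "\<And>u. t \<le> u \<Longrightarrow> u \<le> n \<Longrightarrow> a \<le> excess Y X u"
  shows "a \<le> min_excess n Y X t"
  unfolding min_excess_def using assms by (subst Min_ge_iff) auto

lemma min_excess_last: "min_excess n Y X n = excess Y X n"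
  unfolding min_excess_def by simp

lemma min_excess_Suc: "t < n \<Longrightarrow> min_excess n Y X t = min (excess Y X t) (min_excess n Y X (Suc t))"
proof -
  assume "t < n"
  then have "{t..n} = insert t {Suc t..n}" "{Suc t..n} \<noteq> {}" by auto
  then show ?thesis
    unfolding min_excess_def by (simp add: Min_insert)
qed

lemma min_excess_mono: "t \<le> u \<Longrightarrow> u \<le> n \<Longrightarrow> min_excess n Y X t \<le> min_excess n Y X u"
  by (rule min_excess_greatest) (auto intro: min_excess_le)

lemma min_excess_nonneg: "prefix_le n Y X \<Longrightarrow> t \<le> n \<Longrightarrow> 0 \<le> min_excess n Y X t"
  by (rule min_excess_greatest) (auto intro: prefix_le_excess)

lemma min_excess_0:
  assumes "0 \<notin> X" "0 \<notin> Y" "prefix_le n Y X"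
  shows "min_excess n Y X 0 = 0"
  using min_excess_le[of 0 0 n Y X] min_excess_nonneg[OF assms(3), of 0] excess_0[OF assms(1,2)] by simp

text \<open>Hall's condition for pairing every ball of \<open>T\<close> with a distinct ball of \<open>A\<close> weakly to
  its right, i.e. without wrapping.\<close>

definition suffix_le :: "nat set \<Rightarrow> nat set \<Rightarrow> bool" where
  "suffix_le T A \<longleftrightarrow> (\<forall>s. card {c\<in>T. s \<le> c} \<le> card {c\<in>A. s \<le> c})"

lemma suffix_le_iff_prefix_count:
  assumes A: "A \<subseteq> {1..n}" and T: "T \<subseteq> {1..n}"
  shows "suffix_le T A \<longleftrightarrow> (\<forall>t\<le>n. int (card T) - int (card A) \<le> prefix_count T t - prefix_count A t)"
proof -
  have fin: "finite A" "finite T"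
    using A T finite_subset by auto
  have suffix: "{c\<in>S. s \<le> c} = {c\<in>S. s - 1 < c}" if "S \<subseteq> {1..n}" for S s
    using that by (fastforce simp: subset_iff)
  have "suffix_le T A \<longleftrightarrow> (\<forall>s. card {c\<in>T. s - 1 < c} \<le> card {c\<in>A. s - 1 < c})"
    unfolding suffix_le_def suffix[OF A] suffix[OF T] ..
  also have "\<dots> \<longleftrightarrow> (\<forall>t\<le>n. card {c\<in>T. t < c} \<le> card {c\<in>A. t < c})"
  proof
    assume "\<forall>t\<le>n. card {c\<in>T. t < c} \<le> card {c\<in>A. t < c}"
    moreover have "{c\<in>T. t < c} = {}" if "n < t" for t
      using T that by auto
    ultimately show "\<forall>s. card {c\<in>T. s - 1 < c} \<le> card {c\<in>A. s - 1 < c}"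
      by (metis card.empty le0 not_le)
  next
    assume "\<forall>s. card {c\<in>T. s - 1 < c} \<le> card {c\<in>A. s - 1 < c}"
    then show "\<forall>t\<le>n. card {c\<in>T. t < c} \<le> card {c\<in>A. t < c}"
      by (metis diff_Suc_1)
  qed
  also have "\<dots> \<longleftrightarrow> (\<forall>t\<le>n. int (card T) - int (card A) \<le> prefix_count T t - prefix_count A t)"
  proof -
    have "card {c\<in>T. t < c} \<le> card {c\<in>A. t < c}
        \<longleftrightarrow> int (card T) - int (card A) \<le> prefix_count T t - prefix_count A t" for t
      using card_greater_eq_prefix_count[OF fin(1), of t] card_greater_eq_prefix_count[OF fin(2), of t]
      by linarith
    then show ?thesis
      by simp
  qed
  finally show ?thesis .
qed

section \<open>The unmatched balls of two adjacent rows\<close>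

definition unmatched :: "nat set \<Rightarrow> nat set \<Rightarrow> nat \<Rightarrow> nat set" where
  "unmatched Y X t = {c. c \<le> t \<and> c \<in> X \<and> c \<notin> Y \<and> (\<forall>s\<in>{c..t}. excess Y X c \<le> excess Y X s)}"

definition e_lower :: "nat \<Rightarrow> nat set \<Rightarrow> nat set \<Rightarrow> nat set" where
  "e_lower n Y X = Y \<union> unmatched Y X n"

definition e_upper :: "nat \<Rightarrow> nat set \<Rightarrow> nat set \<Rightarrow> nat set" where
  "e_upper n Y X = X - unmatched Y X n"

lemma unmatched_subset: "unmatched Y X t \<subseteq> X - Y"
  unfolding unmatched_def by auto

lemma unmatched_Suc:
  "unmatched Y X (Suc t) = {c \<in> unmatched Y X t. excess Y X c \<le> excess Y X (Suc t)}
     \<union> (if Suc t \<in> X \<and> Suc t \<notin> Y then {Suc t} else {})"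
proof -
  have "{c..Suc t} = insert (Suc t) {c..t}" if "c \<le> t" for c
    using that by auto
  then show ?thesis
    unfolding unmatched_def by (auto simp: le_Suc_eq)
qed

lemma e_lower_subset: "Y \<subseteq> {1..n} \<Longrightarrow> X \<subseteq> {1..n} \<Longrightarrow> e_lower n Y X \<subseteq> {1..n}"
  unfolding e_lower_def unmatched_def by auto

lemma e_upper_subset: "X \<subseteq> {1..n} \<Longrightarrow> e_upper n Y X \<subseteq> {1..n}"
  unfolding e_upper_def by auto

lemma mem_e_lower_e_upper:
  "of_bool (j \<in> e_lower n Y X) + of_bool (j \<in> e_upper n Y X) = (of_bool (j \<in> Y) + of_bool (j \<in> X) :: nat)"
  unfolding e_lower_def e_upper_def unmatched_def by auto

lemma min_excess_Suc_unmatched: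
  assumes "t < n"
  shows "min_excess n Y X (Suc t) = min_excess n Y X t + of_bool (Suc t \<in> unmatched Y X n)"
proof (cases "Suc t \<in> unmatched Y X n")
  case True
  then have "excess Y X (Suc t) = excess Y X t + 1"
    by (simp add: unmatched_def excess_Suc)
  moreover have "min_excess n Y X (Suc t) = excess Y X (Suc t)"
    using True assms by (intro antisym min_excess_le min_excess_greatest) (auto simp: unmatched_def)
  ultimately show ?thesis
    using True min_excess_Suc[OF assms] by simp
next
  case False
  have "min_excess n Y X (Suc t) \<le> excess Y X t"
  proof (rule ccontr)
    assume "\<not> min_excess n Y X (Suc t) \<le> excess Y X t"
    moreover have "min_excess n Y X (Suc t) \<le> excess Y X (Suc t)"
      using assms by (intro min_excess_le) auto
    moreover have "excess Y X (Suc t) \<le> excess Y X t + 1"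
      by (simp add: excess_Suc)
    ultimately have jump: "excess Y X (Suc t) = excess Y X t + 1"
      and min: "min_excess n Y X (Suc t) = excess Y X (Suc t)"
      by linarith+
    from jump have "Suc t \<in> X" "Suc t \<notin> Y"
      by (auto simp: excess_Suc split: if_splits)
    moreover have "\<forall>s\<in>{Suc t..n}. excess Y X (Suc t) \<le> excess Y X s"
      using min min_excess_le[of "Suc t" _ n Y X] by auto
    ultimately have "Suc t \<in> unmatched Y X n"
      using assms by (auto simp: unmatched_def)
    with False show False ..
  qed
  then show ?thesis
    using False min_excess_Suc[OF assms] by simp
qed

context
  fixes n :: nat and Y X :: "nat set"
  assumes Y_rows: "Y \<subseteq> {1..n}" and X_rows: "X \<subseteq> {1..n}" and Y_le_X: "prefix_le n Y X"
begin

lemma prefix_count_unmatched: "t \<le> n \<Longrightarrow> prefix_count (unmatched Y X n) t = min_excess n Y X t"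
proof (induction t)
  case 0
  have "0 \<notin> X" "0 \<notin> Y" "0 \<notin> unmatched Y X n"
    using X_rows Y_rows unmatched_subset[of Y X n] by auto
  then show ?case
    using min_excess_0[OF _ _ Y_le_X] by (simp add: prefix_count_0)
next
  case (Suc t)
  then show ?case
    using min_excess_Suc_unmatched[of t n Y X] by (simp add: prefix_count_Suc)
qed

lemma prefix_count_e_lower: "t \<le> n \<Longrightarrow> prefix_count (e_lower n Y X) t = prefix_count Y t + min_excess n Y X t"
  unfolding e_lower_def using unmatched_subset[of Y X n]
  by (subst prefix_count_Un) (auto simp: prefix_count_unmatched)

lemma prefix_count_e_upper: "t \<le> n \<Longrightarrow> prefix_count (e_upper n Y X) t = prefix_count X t - min_excess n Y X t"
  unfolding e_upper_def using unmatched_subset[of Y X n]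
  by (subst prefix_count_Diff) (auto simp: prefix_count_unmatched)

lemma card_e_lower: "card (e_lower n Y X) = card X"
  and card_e_upper: "card (e_upper n Y X) = card Y"
  using prefix_count_e_lower[of n] prefix_count_e_upper[of n] min_excess_last[of n Y X]
    prefix_count_card[OF e_lower_subset[OF Y_rows X_rows]] prefix_count_card[OF e_upper_subset[OF X_rows]]
    prefix_count_card[OF X_rows] prefix_count_card[OF Y_rows]
  by (auto simp: excess_def)

lemma e_lower_prefix_le: "prefix_le n (e_lower n Y X) X"
  and e_upper_prefix_le: "prefix_le n (e_upper n Y X) X"
  using prefix_count_e_lower prefix_count_e_upper min_excess_nonneg[OF Y_le_X] min_excess_le[of _ _ n Y X]
  unfolding prefix_le_def excess_def by force+

lemma suffix_le_e_upper_e_lower: "suffix_le (e_upper n Y X) (e_lower n Y X)"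
proof -
  have "int (card (e_upper n Y X)) - int (card (e_lower n Y X))
      \<le> prefix_count (e_upper n Y X) t - prefix_count (e_lower n Y X) t" if "t \<le> n" for t
    using that min_excess_le[of t t n Y X] min_excess_le[of t n n Y X]
      prefix_count_e_lower[OF that] prefix_count_e_upper[OF that]
      prefix_count_card[OF X_rows] prefix_count_card[OF Y_rows]
    by (simp add: card_e_lower card_e_upper excess_def)
  then show ?thesis
    using suffix_le_iff_prefix_count[OF e_lower_subset[OF Y_rows X_rows] e_upper_subset[OF X_rows]]
    by blast
qed

lemma min_excess_recover:
  "t \<le> n \<Longrightarrow> min_excess n Y X t
     = Max ((\<lambda>u. prefix_count (e_lower n Y X) u - prefix_count (e_upper n Y X) u) ` {0..t})"
proof (induction t)
  case 0
  have "0 \<notin> e_lower n Y X" "0 \<notin> e_upper n Y X" "0 \<notin> X" "0 \<notin> Y"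
    using e_lower_subset[OF Y_rows X_rows] e_upper_subset[OF X_rows, of Y] X_rows Y_rows by auto
  then show ?case
    using min_excess_0[OF _ _ Y_le_X] by (simp add: prefix_count_0)
next
  case (Suc t)
  let ?G = "\<lambda>u. prefix_count (e_lower n Y X) u - prefix_count (e_upper n Y X) u"
  have "{0..Suc t} = insert (Suc t) {0..t}"
    by auto
  then have "Max (?G ` {0..Suc t}) = max (?G (Suc t)) (min_excess n Y X t)"
    using Suc by (simp add: Max_insert)
  also have "?G (Suc t) = 2 * min_excess n Y X (Suc t) - excess Y X (Suc t)"
    using prefix_count_e_lower[OF Suc.prems] prefix_count_e_upper[OF Suc.prems] by (simp add: excess_def)
  finally have "Max (?G ` {0..Suc t})
      = max (2 * min_excess n Y X (Suc t) - excess Y X (Suc t)) (min_excess n Y X t)" .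
  moreover have "min_excess n Y X t = min (excess Y X t) (min_excess n Y X (Suc t))"
    using Suc.prems by (simp add: min_excess_Suc)
  moreover have "min_excess n Y X (Suc t) \<le> excess Y X (Suc t)"
    using Suc.prems by (simp add: min_excess_le)
  moreover have "excess Y X (Suc t) \<le> excess Y X t + 1"
    by (simp add: excess_Suc)
  ultimately show ?case
    by linarith
qed

end

lemma e_lower_e_upper_inj:
  assumes "Y \<subseteq> {1..n}" "X \<subseteq> {1..n}" "prefix_le n Y X"
    and "Y' \<subseteq> {1..n}" "X' \<subseteq> {1..n}" "prefix_le n Y' X'"
    and lower: "e_lower n Y X = e_lower n Y' X'" and upper: "e_upper n Y X = e_upper n Y' X'"
  shows "Y = Y'" "X = X'"
proof -
  have "min_excess n Y X t = min_excess n Y' X' t" if "t \<le> n" for t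
    using min_excess_recover[OF assms(1-3) that] min_excess_recover[OF assms(4-6) that] lower upper
    by simp
  then show "Y = Y'" "X = X'"
    using prefix_count_e_lower[OF assms(1-3)] prefix_count_e_lower[OF assms(4-6)]
      prefix_count_e_upper[OF assms(1-3)] prefix_count_e_upper[OF assms(4-6)] lower upper
    by (auto intro!: prefix_count_eqI[OF assms(1,4)] prefix_count_eqI[OF assms(2,5)])
qed

lemma prefix_le_e_lower_e_upper:
  assumes Y: "Y \<subseteq> {1..n}" and X: "X \<subseteq> {1..n}" and C: "C \<subseteq> {1..n}"
    and Y_le_X: "prefix_le n Y X" and X_le_C: "prefix_le n X C"
  shows "prefix_le n X (e_lower n (e_upper n Y X) C)"
  unfolding prefix_le_def
proof (intro allI impI)
  fix t assume t: "t \<le> n"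
  let ?X' = "e_upper n Y X"
  have X': "?X' \<subseteq> {1..n}" and X'_le_C: "prefix_le n ?X' C"
    using e_upper_subset[OF X] prefix_le_trans[OF e_upper_prefix_le[OF Y X Y_le_X] X_le_C] by auto
  have "min_excess n Y X t \<le> min_excess n ?X' C t"
  proof (rule min_excess_greatest[OF t])
    fix u assume u: "t \<le> u" "u \<le> n"
    have "excess ?X' C u = prefix_count C u - prefix_count X u + min_excess n Y X u"
      using prefix_count_e_upper[OF Y X Y_le_X u(2)] by (simp add: excess_def)
    moreover have "prefix_count X u \<le> prefix_count C u"
      using X_le_C u(2) unfolding prefix_le_def by blast
    ultimately show "min_excess n Y X t \<le> excess ?X' C u"
      using min_excess_mono[OF u, of Y X] by linarith
  qed
  then show "prefix_count X t \<le> prefix_count (e_lower n ?X' C) t"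
    using prefix_count_e_lower[OF X' C X'_le_C t] prefix_count_e_upper[OF Y X Y_le_X t] by linarith
qed

lemma suffix_le_e_upper_e_upper:
  assumes A: "A \<subseteq> {1..n}" and B: "B \<subseteq> {1..n}" and C: "C \<subseteq> {1..n}"
    and B_A: "suffix_le B A" and B_le_C: "prefix_le n B C" and A_le: "prefix_le n A (e_lower n B C)"
  shows "suffix_le (e_upper n B C) (e_upper n A (e_lower n B C))"
proof -
  let ?B' = "e_lower n B C"
  have B': "?B' \<subseteq> {1..n}"
    using e_lower_subset[OF B C] .
  have "int (card (e_upper n B C)) - int (card (e_upper n A ?B'))
      \<le> prefix_count (e_upper n B C) t - prefix_count (e_upper n A ?B') t" if t: "t \<le> n" for t
  proof -
    have BA: "int (card B) - int (card A) \<le> prefix_count B u - prefix_count A u" if "u \<le> n" for u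
      using B_A that unfolding suffix_le_iff_prefix_count[OF A B] by blast
    have "int (card B) - int (card A) + min_excess n B C t \<le> min_excess n A ?B' t"
    proof (rule min_excess_greatest[OF t])
      fix u assume u: "t \<le> u" "u \<le> n"
      then show "int (card B) - int (card A) + min_excess n B C t \<le> excess A ?B' u"
        using prefix_count_e_lower[OF B C B_le_C u(2)] BA[OF u(2)] min_excess_mono[OF u, of B C]
        by (simp add: excess_def)
    qed
    then show ?thesis
      using min_excess_le[of t t n B C] t card_e_upper[OF B C B_le_C] card_e_upper[OF A B' A_le]
        prefix_count_e_upper[OF A B' A_le t] prefix_count_e_lower[OF B C B_le_C t]
        prefix_count_e_upper[OF B C B_le_C t]
      by (simp add: excess_def)
  qed
  then show ?thesis
    unfolding suffix_le_iff_prefix_count[OF e_upper_subset[OF B'] e_upper_subset[OF C]] by blast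
qed

section \<open>Bracket matching computes the unmatched balls\<close>

text \<open>Within a column the word \<^const>\<open>cw\<close> reads row \<open>i + 1\<close> before row \<open>i\<close>, so a column
  holding balls of both rows contributes a matched pair and leaves the stack unchanged.\<close>

fun column_step :: "nat set \<Rightarrow> nat set \<Rightarrow> nat list \<Rightarrow> nat \<Rightarrow> nat list" where
  "column_step Y X st c =
     (if c \<in> X \<and> c \<notin> Y then c # st else if c \<in> Y \<and> c \<notin> X then tl st else st)"

fun match_stack :: "nat set \<Rightarrow> nat set \<Rightarrow> nat \<Rightarrow> nat list" where
  "match_stack Y X 0 = []"
| "match_stack Y X (Suc t) = column_step Y X (match_stack Y X t) (Suc t)"

lemma countdown_Cons:
  fixes f :: "'a \<Rightarrow> int"
  assumes "map f (h # rest) = rev [1..e]"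
  shows "map f rest = rev [1..e - 1]" "set rest = {c \<in> set (h # rest). f c \<le> e - 1}"
proof -
  have "1 \<le> e"
    using assms by (cases "e < 1") auto
  then have "rev [1..e] = e # rev [1..e - 1]"
    using upto_rec2[of 1 e] by simp
  then have "f h = e" and rest: "map f rest = rev [1..e - 1]"
    using assms by auto
  moreover have "f c \<le> e - 1" if "c \<in> set rest" for c
    using that arg_cong[OF rest, of set] by force
  ultimately show "map f rest = rev [1..e - 1]" "set rest = {c \<in> set (h # rest). f c \<le> e - 1}"
    by auto
qed

lemma match_stack_invariant:
  assumes Y: "Y \<subseteq> {1..n}" and X: "X \<subseteq> {1..n}" and Y_le_X: "prefix_le n Y X"
  shows "t \<le> n \<Longrightarrow> map (excess Y X) (match_stack Y X t) = rev [1..excess Y X t]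
    \<and> set (match_stack Y X t) = unmatched Y X t"
proof (induction t)
  case 0
  have "0 \<notin> X" "0 \<notin> Y"
    using X Y by auto
  moreover have "unmatched Y X 0 = {}"
    using \<open>0 \<notin> X\<close> by (auto simp: unmatched_def)
  ultimately show ?case
    by (simp add: excess_0)
next
  case (Suc t)
  let ?st = "match_stack Y X t" and ?e = "excess Y X t"
  have IH: "map (excess Y X) ?st = rev [1..?e]" "set ?st = unmatched Y X t"
    using Suc by auto
  have nonneg: "0 \<le> ?e" "0 \<le> excess Y X (Suc t)"
    using prefix_le_excess[OF Y_le_X] Suc.prems by auto
  have below: "excess Y X c \<le> ?e" if "c \<in> unmatched Y X t" for c
    using that by (auto simp: unmatched_def)
  consider (push) "Suc t \<in> X" "Suc t \<notin> Y" | (pop) "Suc t \<in> Y" "Suc t \<notin> X"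
    | (skip) "Suc t \<in> X \<longleftrightarrow> Suc t \<in> Y"
    by blast
  then show ?case
  proof cases
    case push
    then show ?thesis
      using IH nonneg upto_rec2[of 1 "?e + 1"] by (auto simp: excess_Suc unmatched_Suc dest: below)
  next
    case pop
    then have e: "excess Y X (Suc t) = ?e - 1"
      by (simp add: excess_Suc)
    then obtain h rest where st: "?st = h # rest"
      using IH(1) nonneg by (cases ?st) auto
    have "map (excess Y X) rest = rev [1..?e - 1]" "set rest = {c \<in> set ?st. excess Y X c \<le> ?e - 1}"
      using countdown_Cons[of "excess Y X" h rest ?e] IH(1) unfolding st by simp_all
    then show ?thesis
      using pop e st unfolding IH(2) by (simp add: unmatched_Suc)
  next
    case skip
    then show ?thesis
      using IH below by (auto simp: excess_Suc unmatched_Suc)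
  qed
qed

definition match_step :: "nat \<Rightarrow> nat \<times> nat \<Rightarrow> nat list \<Rightarrow> nat list" where
  "match_step i cell st = (if fst cell = Suc i then snd cell # st else if fst cell = i then tl st else st)"

text \<open>Running the bracket matching of \<^const>\<open>unmatched_open\<close> on a list of cells while
  pushing their columns instead of their positions.\<close>

lemma unmatched_open_fold_match_step:
  "\<forall>j < length cs. g (p + j) = snd (cs ! j) \<Longrightarrow>
   g ` unmatched_open i (map fst cs) p st = set (fold (match_step i) cs (map g st))"
proof (induction cs arbitrary: p st)
  case Nil
  then show ?case by simp
next
  case (Cons x cs)
  have head: "g p = snd x"
    using Cons.prems by (metis add_0_right length_Cons nth_Cons_0 zero_less_Suc)
  have tail: "\<forall>j < length cs. g (Suc p + j) = snd (cs ! j)"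
    using Cons.prems by (metis add_Suc_shift add_Suc_right length_Cons nth_Cons_Suc Suc_less_eq)
  show ?case
    using Cons.IH[OF tail, of "p # st"] Cons.IH[OF tail, of "tl st"] Cons.IH[OF tail, of st] head
    by (cases st) (auto simp: match_step_def)
qed

lemma fold_match_step_column:
  assumes "1 \<le> i" "i < L"
  shows "fold (match_step i) (map (\<lambda>r. (r, j)) (filter (\<lambda>r. j \<in> B ! (r - 1)) (rev [1..<Suc L]))) st
         = column_step (B ! (i - 1)) (B ! i) st j"
proof -
  have "[1..<Suc L] = [1..<i] @ i # Suc i # [Suc (Suc i)..<Suc L]"
    using assms upt_add_eq_append[of 1 i "Suc L - i"] by (simp add: upt_conv_Cons)
  then have split: "rev [1..<Suc L] = rev [Suc (Suc i)..<Suc L] @ [Suc i, i] @ rev [1..<i]"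
    by simp
  have skip: "fold (match_step i) (map (\<lambda>r. (r, j)) rs) st = st" if "i \<notin> set rs" "Suc i \<notin> set rs" for rs st
    using that by (induction rs arbitrary: st) (auto simp: match_step_def)
  show ?thesis
    unfolding split filter_append map_append fold_append comp_def
    using assms by (auto simp: skip match_step_def)
qed

lemma fold_match_step_cells:
  assumes "1 \<le> i" "i < length B"
  shows "fold (match_step i) (concat (map (\<lambda>j. map (\<lambda>r. (r, j))
       (filter (\<lambda>r. j \<in> B ! (r - 1)) (rev [1..<Suc (length B)]))) [1..<Suc t])) []
     = match_stack (B ! (i - 1)) (B ! i) t"
proof -
  define cells where
    "cells = (\<lambda>j. map (\<lambda>r. (r, j)) (filter (\<lambda>r. j \<in> B ! (r - 1)) (rev [1..<Suc (length B)])))"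
  have "fold (match_step i) (cells j) st = column_step (B ! (i - 1)) (B ! i) st j" for j st
    unfolding cells_def using fold_match_step_column[OF assms] by simp
  then have "fold (match_step i) (concat (map cells [1..<Suc t])) [] = match_stack (B ! (i - 1)) (B ! i) t"
    by (induction t) simp_all
  then show ?thesis
    unfolding cells_def .
qed

lemma e_star_eq:
  assumes "1 \<le> i" "i < length B"
    and "B ! (i - 1) \<subseteq> {1..n}" "B ! i \<subseteq> {1..n}" "prefix_le n (B ! (i - 1)) (B ! i)"
  shows "e_star n i B = B[i - 1 := e_lower n (B ! (i - 1)) (B ! i), i := e_upper n (B ! (i - 1)) (B ! i)]"
proof -
  let ?g = "\<lambda>p. snd (cw_cells n B ! p)"
  have "?g ` unmatched_open i (cw n B) 0 [] = set (fold (match_step i) (cw_cells n B) [])"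
    using unmatched_open_fold_match_step[of "cw_cells n B" ?g 0 i "[]"] by (simp add: cw_def)
  also have "\<dots> = set (match_stack (B ! (i - 1)) (B ! i) n)"
    unfolding cw_cells_def using fold_match_step_cells[OF assms(1,2)] by simp
  also have "\<dots> = unmatched (B ! (i - 1)) (B ! i) n"
    using match_stack_invariant[OF assms(3-5) order_refl] by simp
  finally show ?thesis
    unfolding e_star_def e_lower_def e_upper_def Let_def by simp
qed

section \<open>Collapsing as iterated row insertion\<close>

text \<open>The list \<open>H\<close> holds rows from the top down; \<open>insert_row n H R\<close> lowers the row \<open>R\<close>,
  lying directly below \<open>H\<close>, through it.\<close>

fun insert_row :: "nat \<Rightarrow> nat set list \<Rightarrow> nat set \<Rightarrow> nat set list" where
  "insert_row n [] R = [R]"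
| "insert_row n (H # Hs) R = e_upper n H R # insert_row n Hs (e_lower n H R)"

fun insertable :: "nat \<Rightarrow> nat set list \<Rightarrow> nat set \<Rightarrow> bool" where
  "insertable n [] R = True"
| "insertable n (H # Hs) R = (prefix_le n H R \<and> insertable n Hs (e_lower n H R))"

lemma length_insert_row [simp]: "length (insert_row n H R) = Suc (length H)"
  by (induction H arbitrary: R) auto

lemma insert_row_subset:
  "set H \<subseteq> Pow {1..n} \<Longrightarrow> R \<subseteq> {1..n} \<Longrightarrow> set (insert_row n H R) \<subseteq> Pow {1..n}"
proof (induction H arbitrary: R)
  case (Cons h H)
  then show ?case
    using e_lower_subset[of h n R] e_upper_subset[of R n h] by simp
qed simp

lemma insertable_insert_row:
  "set G \<subseteq> Pow {1..n} \<Longrightarrow> W \<subseteq> {1..n} \<Longrightarrow> R \<subseteq> {1..n} \<Longrightarrow> insertable n G W \<Longrightarrow>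
   prefix_le n W R \<Longrightarrow> insertable n (insert_row n G W) R"
proof (induction G arbitrary: W R)
  case Nil
  then show ?case by simp
next
  case (Cons g G)
  then have g: "g \<subseteq> {1..n}" "set G \<subseteq> Pow {1..n}" and g_le_W: "prefix_le n g W"
    and G: "insertable n G (e_lower n g W)"
    by auto
  have "prefix_le n (e_upper n g W) R"
    using prefix_le_trans[OF e_upper_prefix_le[OF g(1) Cons.prems(2) g_le_W] Cons.prems(5)] .
  moreover have "prefix_le n (e_lower n g W) (e_lower n (e_upper n g W) R)"
    using prefix_le_trans[OF e_lower_prefix_le[OF g(1) Cons.prems(2) g_le_W]
        prefix_le_e_lower_e_upper[OF g(1) Cons.prems(2,3) g_le_W Cons.prems(5)]] .
  ultimately show ?case
    using Cons.IH[OF g(2) e_lower_subset[OF g(1) Cons.prems(2)]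
        e_lower_subset[OF e_upper_subset[OF Cons.prems(2)] Cons.prems(3)] G]
    by simp
qed

lemma successively_insert_row:
  "set H \<subseteq> Pow {1..n} \<Longrightarrow> R \<subseteq> {1..n} \<Longrightarrow> successively suffix_le H \<Longrightarrow> insertable n H R \<Longrightarrow>
   successively suffix_le (insert_row n H R)"
proof (induction H arbitrary: R)
  case Nil
  then show ?case by simp
next
  case (Cons h H)
  then have h: "h \<subseteq> {1..n}" "set H \<subseteq> Pow {1..n}" and h_le_R: "prefix_le n h R"
    and H: "successively suffix_le H" "insertable n H (e_lower n h R)"
    by (auto simp: successively_Cons)
  have IH: "successively suffix_le (insert_row n H (e_lower n h R))"
    using Cons.IH[OF h(2) e_lower_subset[OF h(1) Cons.prems(2)] H] .
  show ?case
  proof (cases H)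
    case Nil
    then show ?thesis
      using suffix_le_e_upper_e_lower[OF h(1) Cons.prems(2) h_le_R] by simp
  next
    case (Cons h' H')
    then have "h' \<subseteq> {1..n}" "suffix_le h h'" "prefix_le n h' (e_lower n h R)"
      using h(2) Cons.prems(3) H(2) by auto
    then have "suffix_le (e_upper n h R) (e_upper n h' (e_lower n h R))"
      using suffix_le_e_upper_e_upper[OF _ h(1) Cons.prems(2) _ h_le_R] by blast
    then show ?thesis
      using IH Cons by simp
  qed
qed

lemma map_card_insert_row:
  "set H \<subseteq> Pow {1..n} \<Longrightarrow> R \<subseteq> {1..n} \<Longrightarrow> insertable n H R \<Longrightarrow>
   map card (insert_row n H R) = map card H @ [card R]"
proof (induction H arbitrary: R)
  case Nil
  then show ?case by simp
next
  case (Cons h H)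
  then have h: "h \<subseteq> {1..n}" "set H \<subseteq> Pow {1..n}" and h_le_R: "prefix_le n h R"
    and H: "insertable n H (e_lower n h R)"
    by auto
  show ?case
    using Cons.IH[OF h(2) e_lower_subset[OF h(1) Cons.prems(2)] H]
      card_e_lower[OF h(1) Cons.prems(2) h_le_R] card_e_upper[OF h(1) Cons.prems(2) h_le_R]
    by simp
qed

lemma column_count_insert_row:
  "length (filter ((\<in>) j) (insert_row n H R)) = length (filter ((\<in>) j) H) + of_bool (j \<in> R)"
proof (induction H arbitrary: R)
  case Nil
  then show ?case by simp
next
  case (Cons h H)
  then show ?case
    using mem_e_lower_e_upper[of j n h R] by (auto simp: of_bool_def split: if_splits)
qed

lemma insert_row_inj:
  "set H \<subseteq> Pow {1..n} \<Longrightarrow> R \<subseteq> {1..n} \<Longrightarrow> insertable n H R \<Longrightarrow>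
   set H' \<subseteq> Pow {1..n} \<Longrightarrow> R' \<subseteq> {1..n} \<Longrightarrow> insertable n H' R' \<Longrightarrow>
   insert_row n H R = insert_row n H' R' \<Longrightarrow> H = H' \<and> R = R'"
proof (induction H arbitrary: H' R R')
  case Nil
  then show ?case
    by (cases H') (auto dest: arg_cong[where f = length])
next
  case (Cons h H)
  then obtain h' H'' where H': "H' = h' # H''"
    by (cases H') (auto dest: arg_cong[where f = length])
  have h: "h \<subseteq> {1..n}" "set H \<subseteq> Pow {1..n}" "prefix_le n h R" "insertable n H (e_lower n h R)"
    using Cons.prems(1,3) by auto
  have h': "h' \<subseteq> {1..n}" "set H'' \<subseteq> Pow {1..n}" "prefix_le n h' R'" "insertable n H'' (e_lower n h' R')"
    using Cons.prems(4,6) H' by auto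
  have "H = H'' \<and> e_lower n h R = e_lower n h' R'"
    using Cons.IH[OF h(2) e_lower_subset[OF h(1) Cons.prems(2)] h(4)
        h'(2) e_lower_subset[OF h'(1) Cons.prems(5)] h'(4)] Cons.prems(7) H'
    by simp
  moreover have "e_upper n h R = e_upper n h' R'"
    using Cons.prems(7) H' by simp
  ultimately show ?case
    using e_lower_e_upper_inj[OF h(1) Cons.prems(2) h(3) h'(1) Cons.prems(5) h'(3)] H' by simp
qed

lemma e_star_int_insert_row:
  "set H \<subseteq> Pow {1..n} \<Longrightarrow> R \<subseteq> {1..n} \<Longrightarrow> insertable n H R \<Longrightarrow>
   e_star_int n 1 (length H) (rev H @ R # rest) = rev (insert_row n H R) @ rest"
proof (induction H arbitrary: R rest)
  case Nil
  then show ?case by (simp add: e_star_int_def)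
next
  case (Cons h H)
  then have h: "h \<subseteq> {1..n}" "set H \<subseteq> Pow {1..n}" and h_le_R: "prefix_le n h R"
    and H: "insertable n H (e_lower n h R)"
    by auto
  let ?B = "rev H @ h # R # rest"
  have "?B ! length H = h" "?B ! Suc (length H) = R"
    by (auto simp: nth_append)
  then have "e_star n (Suc (length H)) ?B = rev H @ e_lower n h R # e_upper n h R # rest"
    using e_star_eq[of "Suc (length H)" ?B n] h Cons.prems(2) h_le_R by (simp add: list_update_append)
  then show ?case
    using Cons.IH[OF h(2) e_lower_subset[OF h(1) Cons.prems(2)] H] by (simp add: e_star_int_def)
qed

lemma nth_subset_if_set_subset_Pow: "set xs \<subseteq> Pow A \<Longrightarrow> k < length xs \<Longrightarrow> xs ! k \<subseteq> A"
  by (meson Pow_iff nth_mem subsetD)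

fun collapse_chain :: "nat \<Rightarrow> nat set list \<Rightarrow> nat \<Rightarrow> nat set list" where
  "collapse_chain n B 0 = []"
| "collapse_chain n B (Suc k) = insert_row n (collapse_chain n B k) (B ! k)"

lemma length_collapse_chain [simp]: "length (collapse_chain n B k) = k"
  by (induction k) auto

context
  fixes n :: nat and B :: "nat set list"
  assumes B_rows: "set B \<subseteq> Pow {1..n}" and B_prefix: "successively (prefix_le n) B"
begin

lemma collapse_chain_props:
  "k \<le> length B \<Longrightarrow> set (collapse_chain n B k) \<subseteq> Pow {1..n}
     \<and> successively suffix_le (collapse_chain n B k)
     \<and> (k < length B \<longrightarrow> insertable n (collapse_chain n B k) (B ! k))"
proof (induction k)
  case 0
  then show ?case by simp
next
  case (Suc k)
  have rows: "B ! k \<subseteq> {1..n}" "Suc k < length B \<Longrightarrow> B ! Suc k \<subseteq> {1..n}"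
    using nth_subset_if_set_subset_Pow[OF B_rows] Suc.prems by auto
  have "Suc k < length B \<Longrightarrow> prefix_le n (B ! k) (B ! Suc k)"
    using successively_nth[OF B_prefix] .
  then show ?case
    using Suc insert_row_subset[OF _ rows(1)] successively_insert_row[OF _ rows(1)]
      insertable_insert_row[OF _ rows(1) rows(2)]
    by simp
qed

lemma rho_N_collapse_chain: "rho_N n B = rev (collapse_chain n B (length B))"
proof -
  have "fold (e_star_int n 1) [0..<k] B = rev (collapse_chain n B k) @ drop k B" if "k \<le> length B" for k
    using that
  proof (induction k)
    case 0
    then show ?case by simp
  next
    case (Suc k)
    then have "drop k B = B ! k # drop (Suc k) B" "B ! k \<subseteq> {1..n}"
      using nth_subset_if_set_subset_Pow[OF B_rows] by (auto simp: Cons_nth_drop_Suc)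
    then show ?case
      using Suc collapse_chain_props[of k]
        e_star_int_insert_row[of "collapse_chain n B k" n "B ! k" "drop (Suc k) B"]
      by simp
  qed
  moreover have "fold (e_star_int n 1) [0..<length B] B = rho_N n B"
  proof (cases "length B")
    case (Suc L)
    have "e_star_int n 1 0 = id"
      by (simp add: e_star_int_def fun_eq_iff)
    moreover have "[0..<length B] = 0 # [1..<length B]"
      using Suc by (simp add: upt_conv_Cons)
    ultimately show ?thesis
      unfolding rho_N_def by simp
  qed (simp add: rho_N_def)
  ultimately show ?thesis
    by simp
qed

lemma map_card_collapse_chain: "k \<le> length B \<Longrightarrow> map card (collapse_chain n B k) = map card (take k B)"
proof (induction k)
  case (Suc k)
  then show ?case
    using collapse_chain_props[of k] map_card_insert_row[of "collapse_chain n B k" n "B ! k"]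
      nth_subset_if_set_subset_Pow[OF B_rows, of k]
    by (simp add: take_Suc_conv_app_nth)
qed simp

end

lemma column_count_collapse_chain:
  "k \<le> length B \<Longrightarrow> length (filter ((\<in>) j) (collapse_chain n B k)) = length (filter ((\<in>) j) (take k B))"
  by (induction k) (simp_all add: column_count_insert_row take_Suc_conv_app_nth)

lemma collapse_chain_inj:
  assumes "set B \<subseteq> Pow {1..n}" "successively (prefix_le n) B"
    and "set B' \<subseteq> Pow {1..n}" "successively (prefix_le n) B'"
  shows "k \<le> length B \<Longrightarrow> k \<le> length B' \<Longrightarrow> collapse_chain n B k = collapse_chain n B' k
    \<Longrightarrow> take k B = take k B'"
proof (induction k)
  case (Suc k)
  have "k < length B" "k < length B'"
    using Suc.prems(1,2) by auto
  then have "B ! k \<subseteq> {1..n}" "B' ! k \<subseteq> {1..n}"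
    using nth_subset_if_set_subset_Pow assms(1,3) by blast+
  moreover have "set (collapse_chain n B k) \<subseteq> Pow {1..n}" "insertable n (collapse_chain n B k) (B ! k)"
    "set (collapse_chain n B' k) \<subseteq> Pow {1..n}" "insertable n (collapse_chain n B' k) (B' ! k)"
    using collapse_chain_props[OF assms(1,2), of k] collapse_chain_props[OF assms(3,4), of k] Suc.prems
    by auto
  ultimately have "collapse_chain n B k = collapse_chain n B' k \<and> B ! k = B' ! k"
    using insert_row_inj Suc.prems(3) by simp
  then show ?case
    using Suc by (simp add: take_Suc_conv_app_nth)
qed simp
section \<open>Nonwrapping rows\<close>

lemma next_ball_mem:
  assumes "finite A" "A \<noteq> {}"
  shows "next_ball A c \<in> A"
proof (cases "{d\<in>A. c \<le> d} = {}")
  case False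
  then have "Min {d\<in>A. c \<le> d} \<in> {d\<in>A. c \<le> d}"
    using assms(1) by (intro Min_in) auto
  then show ?thesis
    using False by (simp add: next_ball_def)
qed (use assms in \<open>simp add: next_ball_def\<close>)

lemma next_ball_least:
  assumes "finite A" "d \<in> A" "c \<le> d"
  shows "c \<le> next_ball A c" "\<And>x. x \<in> A \<Longrightarrow> c \<le> x \<Longrightarrow> next_ball A c \<le> x"
proof -
  have ne: "{d\<in>A. c \<le> d} \<noteq> {}" and fin: "finite {d\<in>A. c \<le> d}"
    using assms by auto
  then have "Min {d\<in>A. c \<le> d} \<in> {d\<in>A. c \<le> d}"
    by (rule Min_in[rotated])
  moreover have "next_ball A c = Min {d\<in>A. c \<le> d}"
    using ne by (simp add: next_ball_def)
  ultimately show "c \<le> next_ball A c" "\<And>x. x \<in> A \<Longrightarrow> c \<le> x \<Longrightarrow> next_ball A c \<le> x"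
    using fin by auto
qed

lemma suffix_le_nonempty:
  assumes "suffix_le T A" "c \<in> T" "finite T"
  shows "\<exists>d\<in>A. c \<le> d"
proof -
  have "0 < card {y\<in>T. c \<le> y}"
    using assms(2,3) by (auto simp: card_gt_0_iff)
  also have "\<dots> \<le> card {y\<in>A. c \<le> y}"
    using assms(1) unfolding suffix_le_def by blast
  finally show ?thesis
    by (metis (mono_tags, lifting) card.empty empty_Collect_eq less_irrefl)
qed

lemma suffix_le_remove_next_ball:
  assumes A: "finite A" and T: "finite T" and TA: "suffix_le T A" and c: "c \<in> T"
  shows "suffix_le (T - {c}) (A - {next_ball A c})"
  unfolding suffix_le_def
proof
  fix s
  let ?d = "next_ball A c"
  obtain d0 where "d0 \<in> A" "c \<le> d0"
    using suffix_le_nonempty[OF TA c T] by blast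
  then have d: "?d \<in> A" "c \<le> ?d" and least: "\<And>x. x \<in> A \<Longrightarrow> c \<le> x \<Longrightarrow> ?d \<le> x"
    using next_ball_mem[OF A] next_ball_least[OF A] by blast+
  have count: "card {y\<in>T. u \<le> y} \<le> card {y\<in>A. u \<le> y}" for u
    using TA unfolding suffix_le_def by blast
  consider "s \<le> c" | "?d < s" | "c < s" "s \<le> ?d"
    by linarith
  then show "card {y\<in>T - {c}. s \<le> y} \<le> card {y\<in>A - {?d}. s \<le> y}"
  proof cases
    case 1
    then have "{y\<in>T - {c}. s \<le> y} = {y\<in>T. s \<le> y} - {c}" "{y\<in>A - {?d}. s \<le> y} = {y\<in>A. s \<le> y} - {?d}"
      by auto
    then show ?thesis
      using 1 c d count[of s] A T by (simp add: card_Diff_singleton)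
  next
    case 2
    then have "{y\<in>A - {?d}. s \<le> y} = {y\<in>A. s \<le> y}"
      by auto
    moreover have "card {y\<in>T - {c}. s \<le> y} \<le> card {y\<in>T. s \<le> y}"
      using T by (intro card_mono) auto
    ultimately show ?thesis
      using count[of s] by simp
  next
    case 3
    then have "{y\<in>T - {c}. s \<le> y} \<subseteq> {y\<in>T. c \<le> y} - {c}"
      by auto
    then have "card {y\<in>T - {c}. s \<le> y} \<le> card {y\<in>T. c \<le> y} - 1"
      using T c card_mono[of "{y\<in>T. c \<le> y} - {c}"] by (simp add: card_Diff_singleton)
    moreover have "{y\<in>A - {?d}. s \<le> y} = {y\<in>A. c \<le> y} - {?d}"
      using 3 least by force
    then have "card {y\<in>A - {?d}. s \<le> y} = card {y\<in>A. c \<le> y} - 1"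
      using d A by (simp add: card_Diff_singleton)
    ultimately show ?thesis
      using count[of c] by linarith
  qed
qed

lemma suffix_le_insert:
  assumes A: "finite A" and T: "finite T" and d: "d \<in> A" "c \<le> d" and c: "c \<notin> T"
    and TA: "suffix_le T (A - {d})"
  shows "suffix_le (insert c T) A"
  unfolding suffix_le_def
proof
  fix s
  have count: "card {y\<in>T. s \<le> y} \<le> card {y\<in>A - {d}. s \<le> y}"
    using TA unfolding suffix_le_def by blast
  show "card {y\<in>insert c T. s \<le> y} \<le> card {y\<in>A. s \<le> y}"
  proof (cases "s \<le> c")
    case True
    then have "{y\<in>insert c T. s \<le> y} = insert c {y\<in>T. s \<le> y}" "{y\<in>A - {d}. s \<le> y} = {y\<in>A. s \<le> y} - {d}"
      by auto
    moreover have "d \<in> {y\<in>A. s \<le> y}"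
      using True d by auto
    then have "card ({y\<in>A. s \<le> y} - {d}) = card {y\<in>A. s \<le> y} - 1" "0 < card {y\<in>A. s \<le> y}"
      using A by (auto simp: card_gt_0_iff)
    ultimately show ?thesis
      using count c T by simp
  next
    case False
    then have "{y\<in>insert c T. s \<le> y} = {y\<in>T. s \<le> y}"
      by auto
    moreover have "card {y\<in>A - {d}. s \<le> y} \<le> card {y\<in>A. s \<le> y}"
      using A by (intro card_mono) auto
    ultimately show ?thesis
      using count by simp
  qed
qed

lemma pair_row_maj_ge: "m \<le> snd (pair_row r xs A lab m)"
proof (induction xs arbitrary: A lab m)
  case (Cons x xs)
  then show ?case
    by (cases x) (simp add: Let_def, meson le_add1 order_trans)
qed simp

lemma pair_row_labels: "fst (pair_row r xs A lab m) c = Some l \<Longrightarrow> lab c = Some l \<or> l \<in> snd ` set xs"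
proof (induction xs arbitrary: A lab m)
  case (Cons x xs)
  obtain c0 l0 where x: "x = (c0, l0)"
    by (cases x)
  let ?d = "next_ball A c0"
  obtain A' m' where "fst (pair_row r xs A' (lab(?d \<mapsto> l0)) m') c = Some l"
    using Cons.prems x by (simp add: Let_def)
  then have "(lab(?d \<mapsto> l0)) c = Some l \<or> l \<in> snd ` set xs"
    using Cons.IH by blast
  then show ?case
    using x by (cases "c = ?d") auto
qed simp

lemma pair_row_no_wrap:
  "finite A \<Longrightarrow> distinct (map fst xs) \<Longrightarrow> suffix_le (fst ` set xs) A \<Longrightarrow> snd (pair_row r xs A lab m) = m"
proof (induction xs arbitrary: A lab m)
  case (Cons x xs)
  obtain c l where x: "x = (c, l)"
    by (cases x)
  let ?d = "next_ball A c"
  have c: "c \<in> fst ` set (x # xs)" "fst ` set xs = fst ` set (x # xs) - {c}"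
    using Cons.prems(2) x by force+
  obtain d0 where "d0 \<in> A" "c \<le> d0"
    using suffix_le_nonempty[OF Cons.prems(3) c(1)] by blast
  then have "c \<le> ?d"
    using next_ball_least[OF Cons.prems(1)] by blast
  moreover have "suffix_le (fst ` set xs) (A - {?d})"
    unfolding c(2) using suffix_le_remove_next_ball[OF Cons.prems(1) _ Cons.prems(3) c(1)] by simp
  ultimately show ?case
    using Cons.IH[of "A - {?d}"] Cons.prems(1,2) x by (simp add: Let_def)
qed simp

lemma suffix_le_if_pair_row_no_wrap:
  "finite A \<Longrightarrow> distinct (map fst xs) \<Longrightarrow> length xs \<le> card A \<Longrightarrow> (\<forall>x\<in>set xs. r \<le> snd x) \<Longrightarrow>
   snd (pair_row r xs A lab m) = m \<Longrightarrow> suffix_le (fst ` set xs) A"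
proof (induction xs arbitrary: A lab m)
  case Nil
  then show ?case by (simp add: suffix_le_def)
next
  case (Cons x xs)
  obtain c l where x: "x = (c, l)"
    by (cases x)
  let ?d = "next_ball A c"
  let ?w = "if ?d < c then l + 1 - r else 0"
  have "A \<noteq> {}"
    using Cons.prems(3) by auto
  then have d: "?d \<in> A"
    using next_ball_mem[OF Cons.prems(1)] by blast
  have eq: "snd (pair_row r xs (A - {?d}) (lab(?d \<mapsto> l)) (m + ?w)) = m"
    using Cons.prems(5) x by (simp add: Let_def)
  then have "?w = 0"
    using pair_row_maj_ge[of "m + ?w" r xs "A - {?d}" "lab(?d \<mapsto> l)"] by simp
  then have "c \<le> ?d"
    using Cons.prems(4) x by (auto split: if_splits)
  moreover have "suffix_le (fst ` set xs) (A - {?d})"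
    using Cons.IH[of "A - {?d}"] Cons.prems d eq \<open>?w = 0\<close> by (simp add: card_Diff_singleton)
  ultimately show ?case
    using suffix_le_insert[OF Cons.prems(1) _ d] Cons.prems(2) x by simp
qed

text \<open>The labels passed down from row \<open>k + 2\<close> are at least \<open>k + 2\<close>, so every wrapping
  pairing contributes a positive amount to \<^const>\<open>maj\<close>.\<close>

lemma maj_from_eq_0_iff:
  "Suc k \<le> length B \<Longrightarrow> (\<forall>j\<le>k. finite (B ! j)) \<Longrightarrow> (\<forall>j<k. card (B ! Suc j) \<le> card (B ! j)) \<Longrightarrow>
   (\<forall>c l. lab c = Some l \<longrightarrow> Suc k \<le> l) \<Longrightarrow>
   maj_from B (Suc k) lab = 0 \<longleftrightarrow> (\<forall>j<k. suffix_le (B ! Suc j) (B ! j))"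
proof (induction k arbitrary: lab)
  case 0
  then show ?case by simp
next
  case (Suc k)
  define r where "r = Suc (Suc k)"
  define lab' where "lab' = (\<lambda>c. case lab c of Some l \<Rightarrow> l | None \<Rightarrow> r)"
  define balls where "balls = sort_key (\<lambda>c. (- int (lab' c), c)) (sorted_list_of_set (B ! Suc k))"
  define xs where "xs = map (\<lambda>c. (c, lab' c)) balls"
  define res where "res = pair_row r xs (B ! k) Map.empty 0"
  have maj: "maj_from B (Suc (Suc k)) lab = snd res + maj_from B (Suc k) (fst res)"
    unfolding res_def xs_def balls_def lab'_def r_def by (simp add: Let_def)
  have fin: "finite (B ! Suc k)" "finite (B ! k)"
    using Suc.prems(2) by auto
  have xs: "map fst xs = balls" "distinct balls" "fst ` set xs = B ! Suc k" "length xs = card (B ! Suc k)"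
    using fin(1) unfolding xs_def balls_def by (simp_all add: comp_def distinct_sort image_image)
  have labels: "\<forall>x\<in>set xs. r \<le> snd x"
    using Suc.prems(4) unfolding xs_def lab'_def r_def by (auto split: option.splits)
  have "length xs \<le> card (B ! k)"
    using xs Suc.prems(3) by simp
  then have "snd res = 0 \<longleftrightarrow> suffix_le (B ! Suc k) (B ! k)"
    using pair_row_no_wrap[OF fin(2), of xs r Map.empty 0]
      suffix_le_if_pair_row_no_wrap[OF fin(2), of xs r Map.empty 0] xs labels
    unfolding res_def by auto
  moreover have "\<forall>c l. fst res c = Some l \<longrightarrow> Suc k \<le> l"
    using pair_row_labels[of r xs "B ! k" Map.empty 0] labels unfolding res_def r_def by fastforce
  then have "maj_from B (Suc k) (fst res) = 0 \<longleftrightarrow> (\<forall>j<k. suffix_le (B ! Suc j) (B ! j))"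
    using Suc.IH Suc.prems by auto
  ultimately show ?case
    using maj less_Suc_eq by auto
qed

lemma nonwrapping_iff_suffix_le:
  assumes "\<forall>S\<in>set B. finite S" and "successively (\<lambda>Y X. card X \<le> card Y) B"
  shows "nonwrapping B \<longleftrightarrow> successively (\<lambda>Y X. suffix_le X Y) B"
proof (cases "length B")
  case 0
  then show ?thesis by (simp add: nonwrapping_def maj_def)
next
  case (Suc k)
  then have "maj_from B (Suc k) Map.empty = 0 \<longleftrightarrow> (\<forall>j<k. suffix_le (B ! Suc j) (B ! j))"
    using assms by (intro maj_from_eq_0_iff) (auto simp: successively_conv_nth)
  then show ?thesis
    unfolding nonwrapping_def maj_def successively_conv_nth using Suc by auto
qed

section \<open>Multiline queues and rotation\<close>

lemma conj_part_Suc_le: "conj_part lam (Suc r) \<le> conj_part lam r"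
  unfolding conj_part_def by (induction lam) auto

lemma col_count_eq_length_filter: "col_count B j = length (filter ((\<in>) j) B)"
proof -
  have "{r \<in> {1..length B}. j \<in> B ! (r - 1)} = Suc ` {k. k < length B \<and> j \<in> B ! k}"
  proof (intro set_eqI iffI)
    fix r assume "r \<in> {r \<in> {1..length B}. j \<in> B ! (r - 1)}"
    then show "r \<in> Suc ` {k. k < length B \<and> j \<in> B ! k}"
      by (intro image_eqI[of _ _ "r - 1"]) auto
  qed auto
  then show ?thesis
    unfolding col_count_def by (simp add: card_image length_filter_conv_card)
qed

lemma MLQ0_iff:
  "B \<in> MLQ0 lam alpha \<longleftrightarrow> length B = first_part lam \<and> set B \<subseteq> Pow {1..length alpha}
    \<and> (\<forall>k<length B. card (B ! k) = conj_part lam (Suc k))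
    \<and> successively (\<lambda>Y X. suffix_le X Y) B
    \<and> (\<forall>j\<in>{1..length alpha}. length (filter ((\<in>) j) B) = alpha ! (j - 1))"
proof -
  let ?n = "length alpha"
  have "(\<forall>r\<in>{1..length B}. B ! (r - 1) \<subseteq> {1..?n} \<and> card (B ! (r - 1)) = conj_part lam r)
      \<longleftrightarrow> (\<forall>k\<in>{..<length B}. B ! k \<subseteq> {1..?n} \<and> card (B ! k) = conj_part lam (Suc k))"
    unfolding image_Suc_lessThan[symmetric] by simp
  also have "\<dots> \<longleftrightarrow> set B \<subseteq> Pow {1..?n} \<and> (\<forall>k<length B. card (B ! k) = conj_part lam (Suc k))"
    unfolding subset_eq[of "set B"] all_set_conv_all_nth by auto
  finally have rows: "(\<forall>r\<in>{1..length B}. B ! (r - 1) \<subseteq> {1..?n} \<and> card (B ! (r - 1)) = conj_part lam r)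
      \<longleftrightarrow> set B \<subseteq> Pow {1..?n} \<and> (\<forall>k<length B. card (B ! k) = conj_part lam (Suc k))" .
  have "nonwrapping B \<longleftrightarrow> successively (\<lambda>Y X. suffix_le X Y) B"
    if B_rows: "set B \<subseteq> Pow {1..?n}" and B_card: "\<forall>k<length B. card (B ! k) = conj_part lam (Suc k)"
  proof (rule nonwrapping_iff_suffix_le)
    show "\<forall>S\<in>set B. finite S"
      using B_rows by (meson Pow_iff finite_atLeastAtMost finite_subset subsetD)
    show "successively (\<lambda>Y X. card X \<le> card Y) B"
      using B_card by (simp add: successively_conv_nth conj_part_Suc_le)
  qed
  then show ?thesis
    unfolding MLQ0_def mem_Collect_eq rows col_count_eq_length_filter by blast
qed

lemma finite_MLQ0: "finite (MLQ0 lam alpha)"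
proof (rule finite_subset)
  show "MLQ0 lam alpha \<subseteq> {B. set B \<subseteq> Pow {1..length alpha} \<and> length B = first_part lam}"
    by (intro subsetI) (simp add: MLQ0_iff)
  show "finite {B. set B \<subseteq> Pow {1..length alpha} \<and> length B = first_part lam}"
    by (rule finite_lists_length_eq) simp
qed

definition reflect :: "nat \<Rightarrow> nat set \<Rightarrow> nat set" where
  "reflect n S = (\<lambda>c. Suc n - c) ` S"

lemma rot2_eq_map_reflect: "rot2 n B = map (reflect n) (rev B)"
  by (simp add: rot2_def reflect_def rev_map)

lemma inj_on_reflect_column: "inj_on (\<lambda>c. Suc n - c) {1..n}"
  by (auto simp: inj_on_def)

lemma reflect_subset: "S \<subseteq> {1..n} \<Longrightarrow> reflect n S \<subseteq> {1..n}"
  unfolding reflect_def by (force simp: subset_iff)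

lemma card_reflect: "S \<subseteq> {1..n} \<Longrightarrow> card (reflect n S) = card S"
  unfolding reflect_def by (rule card_image) (rule inj_on_subset[OF inj_on_reflect_column])

lemma reflect_reflect: "S \<subseteq> {1..n} \<Longrightarrow> reflect n (reflect n S) = S"
proof -
  assume "S \<subseteq> {1..n}"
  then have "(\<lambda>c. Suc n - (Suc n - c)) ` S = id ` S"
    by (intro image_cong) (force simp: subset_iff)+
  then show ?thesis
    unfolding reflect_def image_image by simp
qed

lemma mem_reflect: "j \<in> {1..n} \<Longrightarrow> S \<subseteq> {1..n} \<Longrightarrow> j \<in> reflect n S \<longleftrightarrow> Suc n - j \<in> S"
  unfolding reflect_def by (force simp: image_iff)

lemma prefix_count_reflect:
  assumes "S \<subseteq> {1..n}"
  shows "prefix_count (reflect n S) t = int (card {c\<in>S. Suc n - t \<le> c})"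
proof -
  have "{c \<in> reflect n S. c \<le> t} = (\<lambda>c. Suc n - c) ` {c\<in>S. Suc n - t \<le> c}"
  proof (intro set_eqI iffI)
    fix x assume "x \<in> {c \<in> reflect n S. c \<le> t}"
    then obtain c where "c \<in> S" "x = Suc n - c" "x \<le> t"
      unfolding reflect_def by auto
    moreover have "c \<le> n"
      using \<open>c \<in> S\<close> assms by auto
    ultimately show "x \<in> (\<lambda>c. Suc n - c) ` {c\<in>S. Suc n - t \<le> c}"
      by auto
  next
    fix x assume "x \<in> (\<lambda>c. Suc n - c) ` {c\<in>S. Suc n - t \<le> c}"
    then obtain c where "c \<in> S" "x = Suc n - c" "Suc n - t \<le> c"
      by auto
    then show "x \<in> {c \<in> reflect n S. c \<le> t}"
      unfolding reflect_def by auto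
  qed
  moreover have "inj_on (\<lambda>c. Suc n - c) {c\<in>S. Suc n - t \<le> c}"
    by (rule inj_on_subset[OF inj_on_reflect_column]) (use assms in auto)
  ultimately show ?thesis
    unfolding prefix_count_def by (simp add: card_image)
qed

lemma prefix_le_reflect_if_suffix_le:
  "S \<subseteq> {1..n} \<Longrightarrow> T \<subseteq> {1..n} \<Longrightarrow> suffix_le T S \<Longrightarrow> prefix_le n (reflect n T) (reflect n S)"
  unfolding prefix_le_def suffix_le_def by (simp add: prefix_count_reflect)
lemma rot2_subset: "set B \<subseteq> Pow {1..n} \<Longrightarrow> set (rot2 n B) \<subseteq> Pow {1..n}"
  unfolding rot2_eq_map_reflect set_map set_rev using reflect_subset by blast

lemma rot2_rot2:
  assumes "set B \<subseteq> Pow {1..n}"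
  shows "rot2 n (rot2 n B) = B"
proof -
  have "rot2 n (rot2 n B) = map (reflect n \<circ> reflect n) B"
    by (simp add: rot2_eq_map_reflect rev_map)
  also have "\<dots> = B"
  proof (rule map_idI)
    fix S assume "S \<in> set B"
    then have "S \<subseteq> {1..n}"
      using assms by blast
    then show "(reflect n \<circ> reflect n) S = S"
      by (simp add: reflect_reflect)
  qed
  finally show ?thesis .
qed

lemma map_card_rot2: "set B \<subseteq> Pow {1..n} \<Longrightarrow> map card (rot2 n B) = rev (map card B)"
  unfolding rot2_eq_map_reflect rev_map[symmetric] map_map
  by (auto simp: card_reflect intro!: map_cong)

lemma column_count_rot2:
  "j \<in> {1..n} \<Longrightarrow> set B \<subseteq> Pow {1..n} \<Longrightarrow>
   length (filter ((\<in>) j) (rot2 n B)) = length (filter ((\<in>) (Suc n - j)) B)"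
  unfolding rot2_eq_map_reflect rev_map[symmetric] rev_filter[symmetric] length_rev filter_map comp_def
  by (auto simp: mem_reflect intro!: arg_cong[where f = length] filter_cong)

lemma successively_prefix_le_rot2:
  "set B \<subseteq> Pow {1..n} \<Longrightarrow> successively (\<lambda>Y X. suffix_le X Y) B \<Longrightarrow> successively (prefix_le n) (rot2 n B)"
  unfolding rot2_eq_map_reflect successively_map successively_rev
  by (erule successively_mono) (blast intro: prefix_le_reflect_if_suffix_le)

section \<open>The bijection\<close>

context
  fixes n :: nat and B :: "nat set list"
  assumes B_rows: "set B \<subseteq> Pow {1..n}" and B_nonwrapping: "successively (\<lambda>Y X. suffix_le X Y) B"
begin

lemma rot2_props: "set (rot2 n B) \<subseteq> Pow {1..n}" "successively (prefix_le n) (rot2 n B)"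
  "length (rot2 n B) = length B"
  using rot2_subset[OF B_rows] successively_prefix_le_rot2[OF B_rows B_nonwrapping]
  by (simp_all add: rot2_eq_map_reflect)

lemma rho_up_eq_collapse_chain: "rho_up n B = rev (collapse_chain n (rot2 n B) (length B))"
  using rho_N_collapse_chain[OF rot2_props(1,2)] rot2_props(3) by (simp add: rho_up_def)

lemma length_rho_up: "length (rho_up n B) = length B"
  by (simp add: rho_up_eq_collapse_chain)

lemma rho_up_subset: "set (rho_up n B) \<subseteq> Pow {1..n}"
  and rho_up_nonwrapping: "successively (\<lambda>Y X. suffix_le X Y) (rho_up n B)"
  using collapse_chain_props[OF rot2_props(1,2), of "length B"] rot2_props(3)
  by (simp_all add: rho_up_eq_collapse_chain)

lemma map_card_rho_up: "map card (rho_up n B) = map card B"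
  using map_card_collapse_chain[OF rot2_props(1,2), of "length B"] map_card_rot2[OF B_rows] rot2_props(3)
  by (simp add: rho_up_eq_collapse_chain rev_map[symmetric])

lemma column_count_rho_up:
  "j \<in> {1..n} \<Longrightarrow> length (filter ((\<in>) j) (rho_up n B)) = length (filter ((\<in>) (Suc n - j)) B)"
  using column_count_collapse_chain[of "length B" "rot2 n B" j n] column_count_rot2[of j n B] B_rows
    rot2_props(3)
  by (simp add: rho_up_eq_collapse_chain rev_filter[symmetric])

end

lemma rho_up_inj:
  assumes "set B \<subseteq> Pow {1..n}" "successively (\<lambda>Y X. suffix_le X Y) B"
    and "set B' \<subseteq> Pow {1..n}" "successively (\<lambda>Y X. suffix_le X Y) B'"
    and "length B = length B'" and "rho_up n B = rho_up n B'"
  shows "B = B'"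
proof -
  have "collapse_chain n (rot2 n B) (length B) = collapse_chain n (rot2 n B') (length B)"
    using assms(5,6) rho_up_eq_collapse_chain[OF assms(1,2)] rho_up_eq_collapse_chain[OF assms(3,4)]
    by simp
  then have "rot2 n B = rot2 n B'"
    using collapse_chain_inj[OF rot2_props(1,2)[OF assms(1,2)] rot2_props(1,2)[OF assms(3,4)],
        of "length B"] rot2_props(3)[OF assms(1,2)] rot2_props(3)[OF assms(3,4)] assms(5)
    by simp
  then show ?thesis
    using rot2_rot2[OF assms(1)] rot2_rot2[OF assms(3)] by metis
qed

lemma rho_up_in_MLQ0:
  assumes "B \<in> MLQ0 lam alpha"
  shows "rho_up (length alpha) B \<in> MLQ0 lam (rev alpha)"
proof -
  let ?n = "length alpha"
  have rows: "set B \<subseteq> Pow {1..?n}" and nonwrapping: "successively (\<lambda>Y X. suffix_le X Y) B"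
    and len: "length B = first_part lam" and card: "\<forall>k<length B. card (B ! k) = conj_part lam (Suc k)"
    and col: "\<forall>j\<in>{1..?n}. length (filter ((\<in>) j) B) = alpha ! (j - 1)"
    using assms unfolding MLQ0_iff by auto
  have "length (filter ((\<in>) j) (rho_up ?n B)) = rev alpha ! (j - 1)" if j: "j \<in> {1..?n}" for j
  proof -
    have "length (filter ((\<in>) j) (rho_up ?n B)) = length (filter ((\<in>) (Suc ?n - j)) B)"
      by (rule column_count_rho_up[OF rows nonwrapping j])
    also have "\<dots> = alpha ! (Suc ?n - j - 1)"
      by (rule bspec[OF col]) (use j in auto)
    also have "\<dots> = rev alpha ! (j - 1)"
      using j rev_nth[of "j - 1" alpha] by auto
    finally show ?thesis .
  qed
  moreover have "\<forall>k<length B. card (rho_up ?n B ! k) = conj_part lam (Suc k)"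
    using card map_card_rho_up[OF rows nonwrapping] by (metis length_map nth_map)
  ultimately show ?thesis
    unfolding MLQ0_iff length_rev
    using len length_rho_up[OF rows nonwrapping] rho_up_subset[OF rows nonwrapping]
      rho_up_nonwrapping[OF rows nonwrapping]
    by simp
qed

lemma inj_on_rho_up: "inj_on (rho_up (length alpha)) (MLQ0 lam alpha)"
  by (rule inj_onI, rule rho_up_inj) (auto simp: MLQ0_iff)

theorem proposition5p14:
  fixes lam alpha :: "nat list"
  assumes "is_partition lam"
  shows "bij_betw (rho_up (length alpha)) (MLQ0 lam alpha) (MLQ0 lam (rev alpha))"
proof -
  let ?f = "rho_up (length alpha)"
  have to_rev: "?f ` MLQ0 lam alpha \<subseteq> MLQ0 lam (rev alpha)"
    using rho_up_in_MLQ0 by blast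
  have from_rev: "?f ` MLQ0 lam (rev alpha) \<subseteq> MLQ0 lam alpha"
    using rho_up_in_MLQ0[of _ lam "rev alpha"] by auto
  have "card (MLQ0 lam (rev alpha)) \<le> card (MLQ0 lam alpha)"
    using card_inj_on_le[OF inj_on_rho_up[of "rev alpha" lam] _ finite_MLQ0] from_rev by simp
  then have "card (?f ` MLQ0 lam alpha) = card (MLQ0 lam (rev alpha))"
    using card_image[OF inj_on_rho_up[of alpha lam]] card_mono[OF finite_MLQ0 to_rev] by linarith
  then have "?f ` MLQ0 lam alpha = MLQ0 lam (rev alpha)"
    by (rule card_subset_eq[OF finite_MLQ0 to_rev])
  then show ?thesis
    using inj_on_rho_up unfolding bij_betw_def by blast
qed

end
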